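(* There are infinitely many positive integers $N$ for which there are infinitely many pairs $(A,B)$ of antipalindromic numbers with $N=A/B$.
   Context: A positive integer $n$ is antipalindromic if its binary representation $w=w_1\cdots w_L$ (most significant digit first, no leading zeros) has even length $L$ and satisfies $w_i+w_{L+1-i}=1$ for all $i$. *)

theory Defs
  imports Main
begin

fun bin_lsb :: "nat \<Rightarrow> nat list" where
  "bin_lsb n = (if n = 0 then [] else n mod 2 # bin_lsb (n div 2))"

definition binary_digits :: "nat \<Rightarrow> nat list" where
  "binary_digits n = rev (bin_lsb n)"

definition antipalindromic :: "nat \<Rightarrow> bool" where
  "antipalindromic n \<longleftrightarrow> n > 0 \<and>
     (let w = binary_digits n; L = length w in
        even L \<and> (\<forall>i<L. w ! i + w ! (L - 1 - i) = 1))"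

end

theory Submission
  imports Defs
begin

text \<open>
  For \<open>a = 2^m\<close> put \<open>N = a (2a - 1)\<close>. Written least significant bit first, the block
  \<open>y = 1^(m+2) 0^(m+2)\<close> has value \<open>4a - 1\<close> and the block \<open>x = 1 0^m 1 0 1^m 0\<close> has value
  \<open>1 + 2a + 8a(a - 1) = (2a - 1)(4a - 1)\<close>; both have length \<open>2m + 4\<close> and are fixed by
  complementing and reversing. Hence for every \<open>j\<close> the words \<open>B = 0 y^j 1\<close> and
  \<open>A = 0^(m+1) x^j 1^(m+1)\<close> are antipalindromic, and comparing values block by block gives
  \<open>A = N B\<close>. Varying \<open>j\<close> gives infinitely many pairs, varying \<open>m\<close> infinitely many \<open>N\<close>.
\<close>

abbreviation bin_val :: "nat list \<Rightarrow> nat" where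
  "bin_val w \<equiv> horner_sum id 2 w"

definition canonical_binary :: "nat list \<Rightarrow> bool" where
  "canonical_binary w \<longleftrightarrow> set w \<subseteq> {0, 1} \<and> (w \<noteq> [] \<longrightarrow> last w = 1)"

definition flip_rev :: "nat list \<Rightarrow> nat list" where
  "flip_rev w = map (\<lambda>b. 1 - b) (rev w)"

(* The defining equation of bin_lsb has no constructor pattern, so as a simp rule it would unfold forever. *)
declare bin_lsb.simps [simp del]

lemma bin_lsb_0 [simp]: "bin_lsb 0 = []"
  by (simp add: bin_lsb.simps)

lemma bin_lsb_pos: "n > 0 \<Longrightarrow> bin_lsb n = n mod 2 # bin_lsb (n div 2)"
  by (simp add: bin_lsb.simps)

lemma antipalindromic_pos: "antipalindromic n \<Longrightarrow> n > 0"
  by (simp add: antipalindromic_def)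

lemma bin_val_pos: "w \<noteq> [] \<Longrightarrow> last w = 1 \<Longrightarrow> bin_val w > 0"
  by (induction w) (auto split: if_splits)

lemma bin_lsb_bin_val:
  assumes "canonical_binary w"
  shows "bin_lsb (bin_val w) = w"
  using assms
proof (induction w)
  case Nil
  then show ?case by simp
next
  case (Cons b w)
  then have b: "b \<le> 1" and w: "canonical_binary w"
    by (auto simp: canonical_binary_def split: if_splits)
  show ?case
  proof (cases "w = []")
    case True
    with Cons.prems show ?thesis by (simp add: canonical_binary_def bin_lsb_pos)
  next
    case False
    with Cons.prems have "bin_val w > 0"
      by (intro bin_val_pos) (auto simp: canonical_binary_def)
    with b have pos: "bin_val (b # w) > 0"
      and "bin_val (b # w) mod 2 = b" "bin_val (b # w) div 2 = bin_val w"
      by auto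
    with Cons.IH[OF w] show ?thesis by (simp only: bin_lsb_pos[OF pos])
  qed
qed

lemma inj_on_bin_val: "inj_on bin_val {w. canonical_binary w}"
  by (rule inj_on_inverseI[where g = bin_lsb]) (simp add: bin_lsb_bin_val)

lemma antipalindromic_bin_val:
  assumes "canonical_binary w" "w \<noteq> []" "flip_rev w = w" "even (length w)"
  shows "antipalindromic (bin_val w)"
proof -
  let ?L = "length w"
  have digits: "binary_digits (bin_val w) = rev w"
    unfolding binary_digits_def using bin_lsb_bin_val[OF assms(1)] by simp
  have "w ! i + w ! (?L - 1 - i) = 1" if "i < ?L" for i
  proof -
    have flip: "w ! i = 1 - w ! (?L - 1 - i)"
      using that arg_cong[OF assms(3), of "\<lambda>u. u ! i"] by (simp add: flip_rev_def rev_nth)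
    have "w ! (?L - 1 - i) \<in> set w"
      using that by simp
    then have "w ! (?L - 1 - i) \<le> 1"
      using assms(1) by (auto simp: canonical_binary_def)
    with flip show ?thesis by linarith
  qed
  then have "(rev w) ! i + (rev w) ! (?L - 1 - i) = 1" if "i < ?L" for i
    using that by (simp add: rev_nth add.commute)
  moreover have "bin_val w > 0"
    using assms(1,2) bin_val_pos by (simp add: canonical_binary_def)
  ultimately show ?thesis
    unfolding antipalindromic_def Let_def digits using assms(4) by simp
qed

lemma flip_rev_append: "flip_rev (x @ y) = flip_rev y @ flip_rev x"
  by (simp add: flip_rev_def)

lemma flip_rev_singleton: "flip_rev [b] = [1 - b]"
  by (simp add: flip_rev_def)

lemma flip_rev_replicate: "flip_rev (replicate n b) = replicate n (1 - b)"
  by (simp add: flip_rev_def)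

lemma flip_rev_concat: "flip_rev (concat ws) = concat (rev (map flip_rev ws))"
  unfolding flip_rev_def by (simp add: rev_concat map_concat rev_map comp_def)

lemma bin_val_replicate_0: "bin_val (replicate n 0) = 0"
  by (induction n) auto

lemma bin_val_replicate_1: "bin_val (replicate n 1) + 1 = 2 ^ n"
  by (induction n) auto

lemma bin_val_concat_replicate:
  "bin_val (concat (replicate j w)) = bin_val w * (\<Sum>i<j. 2 ^ (i * length w))"
  by (induction j) (simp_all add: horner_sum_append sum.lessThan_Suc_shift sum_distrib_left
      power_add algebra_simps del: sum.lessThan_Suc)

definition numer_block :: "nat \<Rightarrow> nat list" where
  "numer_block m = [1] @ replicate m 0 @ [1, 0] @ replicate m 1 @ [0]"

definition denom_block :: "nat \<Rightarrow> nat list" where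
  "denom_block m = replicate (m + 2) 1 @ replicate (m + 2) 0"

definition numer_word :: "nat \<Rightarrow> nat \<Rightarrow> nat list" where
  "numer_word m j = replicate (m + 1) 0 @ concat (replicate j (numer_block m)) @ replicate (m + 1) 1"

definition denom_word :: "nat \<Rightarrow> nat \<Rightarrow> nat list" where
  "denom_word m j = [0] @ concat (replicate j (denom_block m)) @ [1]"

definition ratio :: "nat \<Rightarrow> nat" where
  "ratio m = 2 ^ m * (2 ^ (m + 1) - 1)"

lemma one_less_two_power_Suc: "(1 :: nat) < 2 ^ Suc m"
  by (induction m) auto

lemma length_numer_block: "length (numer_block m) = 2 * m + 4"
  by (simp add: numer_block_def)

lemma length_denom_block: "length (denom_block m) = 2 * m + 4"
  by (simp add: denom_block_def)

lemma length_denom_word: "length (denom_word m j) = j * (2 * m + 4) + 2"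
  by (simp add: denom_word_def length_concat sum_list_replicate length_denom_block)

lemma bin_val_numer_block:
  "bin_val (numer_block m) = (2 ^ (m + 1) - 1) * bin_val (denom_block m)"
proof -
  define k where "k = bin_val (replicate m 1)"
  have pow: "2 ^ m = k + 1"
    using bin_val_replicate_1[of m] by (simp add: k_def)
  have "bin_val (numer_block m) = 1 + 2 * 2 ^ m + 8 * 2 ^ m * k"
    by (simp add: numer_block_def horner_sum_append bin_val_replicate_0 k_def algebra_simps)
  also have "\<dots> = (2 * k + 1) * (4 * k + 3)"
    unfolding pow by (simp add: algebra_simps)
  also have "4 * k + 3 = bin_val (denom_block m)"
    by (simp add: denom_block_def horner_sum_append bin_val_replicate_0 k_def)
  also have "2 * k + 1 = 2 ^ (m + 1) - 1"
    using pow by simp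
  finally show ?thesis .
qed

lemma bin_val_numer_word: "bin_val (numer_word m j) = ratio m * bin_val (denom_word m j)"
proof -
  let ?q = "2 ^ (m + 1) - 1 :: nat"
  define S where "S = bin_val (concat (replicate j (denom_block m)))"
  define T where "T = (2 :: nat) ^ (j * (2 * m + 4))"
  have "bin_val (concat (replicate j (numer_block m))) = ?q * S"
    by (simp add: S_def bin_val_concat_replicate bin_val_numer_block
        length_numer_block length_denom_block)
  moreover have "bin_val (replicate (m + 1) 1) = ?q"
    using bin_val_replicate_1[of "m + 1"] by simp
  ultimately have "bin_val (numer_word m j) = 2 ^ (m + 1) * (?q * S + T * ?q)"
    by (simp add: numer_word_def horner_sum_append bin_val_replicate_0 T_def
        length_concat sum_list_replicate length_numer_block)
  moreover have "bin_val (denom_word m j) = 2 * (S + T)"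
    by (simp add: denom_word_def horner_sum_append S_def T_def
        length_concat sum_list_replicate length_denom_block)
  ultimately show ?thesis
    by (simp add: ratio_def algebra_simps)
qed

lemma flip_rev_numer_block: "flip_rev (numer_block m) = numer_block m"
  by (simp add: numer_block_def flip_rev_def)

lemma flip_rev_denom_block: "flip_rev (denom_block m) = denom_block m"
  unfolding denom_block_def flip_rev_append flip_rev_replicate by simp

lemma canonical_numer_word: "canonical_binary (numer_word m j)"
  by (auto simp: canonical_binary_def numer_word_def numer_block_def)

lemma canonical_denom_word: "canonical_binary (denom_word m j)"
  by (auto simp: canonical_binary_def denom_word_def denom_block_def)

lemma antipalindromic_numer_word: "antipalindromic (bin_val (numer_word m j))"
proof (rule antipalindromic_bin_val[OF canonical_numer_word])
  show "flip_rev (numer_word m j) = numer_word m j"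
    unfolding numer_word_def flip_rev_append flip_rev_replicate flip_rev_concat
    by (simp add: flip_rev_numer_block)
  show "even (length (numer_word m j))"
    by (simp add: numer_word_def length_concat sum_list_replicate length_numer_block)
qed (simp add: numer_word_def)

lemma antipalindromic_denom_word: "antipalindromic (bin_val (denom_word m j))"
proof (rule antipalindromic_bin_val[OF canonical_denom_word])
  show "flip_rev (denom_word m j) = denom_word m j"
    unfolding denom_word_def flip_rev_append flip_rev_singleton flip_rev_concat
    by (simp add: flip_rev_denom_block)
  show "even (length (denom_word m j))"
    by (simp add: length_denom_word)
qed (simp add: denom_word_def)

lemma inj_bin_val_denom_word: "inj (\<lambda>j. bin_val (denom_word m j))"
proof (rule injI)
  fix j j'
  assume "bin_val (denom_word m j) = bin_val (denom_word m j')"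
  then have "denom_word m j = denom_word m j'"
    using inj_on_bin_val canonical_denom_word by (auto dest: inj_onD)
  then have "length (denom_word m j) = length (denom_word m j')"
    by simp
  then show "j = j'"
    by (simp add: length_denom_word)
qed

lemma strict_mono_ratio: "strict_mono ratio"
  unfolding strict_mono_Suc_iff
proof
  fix m
  have "(2::nat) ^ (m + 1) - 1 \<le> 2 ^ (m + 2) - 1"
    by simp
  then show "ratio m < ratio (Suc m)"
    unfolding ratio_def using one_less_two_power_Suc[of m]
    by (intro mult_less_le_imp_less) auto
qed

theorem theorem20:
  shows "infinite {N :: nat. N > 0 \<and>
           infinite {(A, B). (A::nat) > 0 \<and> (B::nat) > 0 \<and> antipalindromic A \<and> antipalindromic B \<and> A = N * B}}"
proof -
  let ?pairs = "\<lambda>N. {(A, B). (A::nat) > 0 \<and> (B::nat) > 0 \<and> antipalindromic A \<and> antipalindromic B \<and> A = N * B}"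
  let ?witness = "\<lambda>m j. (bin_val (numer_word m j), bin_val (denom_word m j))"
  have "range (?witness m) \<subseteq> ?pairs (ratio m)" for m
    using antipalindromic_numer_word antipalindromic_denom_word bin_val_numer_word
    by (auto intro: antipalindromic_pos)
  moreover have "inj (?witness m)" for m
    using inj_bin_val_denom_word by (auto simp: inj_def)
  ultimately have "infinite (?pairs (ratio m))" for m
    unfolding infinite_iff_countable_subset by blast
  moreover have "ratio m > 0" for m
    using one_less_two_power_Suc[of m] by (simp add: ratio_def)
  ultimately have "range ratio \<subseteq> {N. N > 0 \<and> infinite (?pairs N)}"
    by blast
  then show ?thesis
    unfolding infinite_iff_countable_subset using strict_mono_ratio strict_mono_imp_inj_on by blast
qed

end
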